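(* Let $G'\subseteq G$ be digraphs (i.e. $V(G')\subseteq V(G)$, $E(G')\subseteq E(G)$), let $f$ be a discrete Morse function on $G$ and $f'=f|_{V(G')}$. Then for each $n\ge0$, $\mathrm{Crit}_n(G)\cap P_n(G')\subseteq\mathrm{Crit}_n(G')$, where criticality in $G$ is with respect to $f$ and in $G'$ with respect to $f'$. Equivalently, every allowed elementary $n$-path of $G'$ that is critical in $G$ (for $f$) is critical in $G'$ (for $f'$).
   Context: A digraph $G=(V,E)$ consists of a set $V$ and $E\subseteq(V\times V)\setminus\{(v,v)\}$; $(u,v)\in E$ is written $u\to v$. An allowed elementary $n$-path is a sequence $v_0\cdots v_n$ of vertices with $v_{i-1}\to v_i\in E$ for $1\le i\le n$. Over a commutative ring $R$ with unit, $P_n(G)$ is the free $R$-module on the allowed elementary $n$-paths of $G$ and $\mathrm{Crit}_n(G)\subseteq P_n(G)$ is the submodule spanned by the critical ones. For allowed elementary paths, $\gamma'<\gamma$ (or $\gamma>\gamma'$) means $\gamma'$ is obtained from $\gamma$ by deleting some entries. A map $f:V\to[0,+\infty)$ is a discrete Morse function on $G$ if for every allowed elementary path $v_0\cdots v_n$: (i) there is at most one index $i$ with $f(v_i)=0$ such that $v_0\cdots v_{i-1}v_{i+1}\cdots v_n$ is an allowed elementary $(n-1)$-path; (ii) there is at most one vertex $u$ with $f(u)=0$ such that for some $-1\le j\le n$ the sequence $v_0\cdots v_juv_{j+1}\cdots v_n$ (meaning $uv_0\cdots v_n$ if $j=-1$, $v_0\cdots v_nu$ if $j=n$) is an allowed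 elementary $(n+1)$-path. (The restriction of a discrete Morse function to a subdigraph is a discrete Morse function.) Set $f(v_0\cdots v_n)=\sum_if(v_i)$. An allowed elementary $n$-path $\gamma$ is critical if there is no allowed elementary $(n-1)$-path $\beta<\gamma$ with $f(\beta)=f(\gamma)$ and no allowed elementary $(n+1)$-path $\alpha>\gamma$ with $f(\alpha)=f(\gamma)$. *)

theory Defs
  imports Complex_Main "HOL-Library.Sublist"
begin

definition digraph :: "'v set \<Rightarrow> ('v \<times> 'v) set \<Rightarrow> bool" where
  "digraph V E \<longleftrightarrow> E \<subseteq> (V \<times> V) - {(v, v) | v. True}"

definition subdigraph :: "'v set \<Rightarrow> ('v \<times> 'v) set \<Rightarrow> 'v set \<Rightarrow> ('v \<times> 'v) set \<Rightarrow> bool" where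
  "subdigraph V' E' V E \<longleftrightarrow> digraph V' E' \<and> digraph V E \<and> V' \<subseteq> V \<and> E' \<subseteq> E"

definition allowed_path :: "'v set \<Rightarrow> ('v \<times> 'v) set \<Rightarrow> 'v list \<Rightarrow> bool" where
  "allowed_path V E p \<longleftrightarrow> p \<noteq> [] \<and> set p \<subseteq> V \<and>
     (\<forall>i. Suc i < length p \<longrightarrow> (p ! i, p ! Suc i) \<in> E)"

definition allowed_npath :: "'v set \<Rightarrow> ('v \<times> 'v) set \<Rightarrow> nat \<Rightarrow> 'v list \<Rightarrow> bool" where
  "allowed_npath V E n p \<longleftrightarrow> allowed_path V E p \<and> length p = Suc n"

definition path_less :: "'v list \<Rightarrow> 'v list \<Rightarrow> bool" where
  "path_less q p \<longleftrightarrow> subseq q p \<and> length q < length p"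

definition del_at :: "nat \<Rightarrow> 'v list \<Rightarrow> 'v list" where
  "del_at i p = take i p @ drop (Suc i) p"

definition ins_at :: "nat \<Rightarrow> 'v \<Rightarrow> 'v list \<Rightarrow> 'v list" where
  "ins_at j u p = take j p @ u # drop j p"

definition discrete_morse :: "'v set \<Rightarrow> ('v \<times> 'v) set \<Rightarrow> ('v \<Rightarrow> real) \<Rightarrow> bool" where
  "discrete_morse V E f \<longleftrightarrow> (\<forall>v\<in>V. f v \<ge> 0) \<and>
     (\<forall>p. allowed_path V E p \<longrightarrow>
        (\<forall>i k. i < length p \<and> f (p ! i) = 0 \<and> allowed_path V E (del_at i p) \<and>
               k < length p \<and> f (p ! k) = 0 \<and> allowed_path V E (del_at k p) \<longrightarrow> i = k) \<and>
        (\<forall>u w. (f u = 0 \<and> (\<exists>j \<le> length p. allowed_path V E (ins_at j u p))) \<and>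
               (f w = 0 \<and> (\<exists>j \<le> length p. allowed_path V E (ins_at j w p))) \<longrightarrow> u = w))"

definition path_val :: "('v \<Rightarrow> real) \<Rightarrow> 'v list \<Rightarrow> real" where
  "path_val f p = (\<Sum>i<length p. f (p ! i))"

definition critical :: "'v set \<Rightarrow> ('v \<times> 'v) set \<Rightarrow> ('v \<Rightarrow> real) \<Rightarrow> nat \<Rightarrow> 'v list \<Rightarrow> bool" where
  "critical V E f n p \<longleftrightarrow> allowed_npath V E n p \<and>
     \<not> (\<exists>b. n \<ge> 1 \<and> allowed_npath V E (n - 1) b \<and> path_less b p \<and> path_val f b = path_val f p) \<and>
     \<not> (\<exists>a. allowed_npath V E (Suc n) a \<and> path_less p a \<and> path_val f a = path_val f p)"

text \<open>Free R-module on a set S of paths, realised as finitely supported coefficient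
  functions supported in S (= span of S inside the free module on all lists).\<close>
definition free_span :: "'v list set \<Rightarrow> ('v list \<Rightarrow> 'r::comm_ring_1) set" where
  "free_span S = {c. finite {p. c p \<noteq> 0} \<and> (\<forall>p. c p \<noteq> 0 \<longrightarrow> p \<in> S)}"

definition P_mod :: "'v set \<Rightarrow> ('v \<times> 'v) set \<Rightarrow> nat \<Rightarrow> ('v list \<Rightarrow> 'r::comm_ring_1) set" where
  "P_mod V E n = free_span {p. allowed_npath V E n p}"

definition Crit_mod :: "'v set \<Rightarrow> ('v \<times> 'v) set \<Rightarrow> ('v \<Rightarrow> real) \<Rightarrow> nat \<Rightarrow> ('v list \<Rightarrow> 'r::comm_ring_1) set" where
  "Crit_mod V E f n = free_span {p. critical V E f n p}"

end

theory Submission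
  imports Defs
begin

text \<open>A witness against criticality in the subdigraph (a face or coface with the same value)
  is an allowed path of the ambient digraph, and the restricted function agrees with the
  original one along it; so it is also a witness in the ambient digraph.\<close>

lemma allowed_path_subdigraph:
  assumes "subdigraph V' E' V E" "allowed_path V' E' p"
  shows "allowed_path V E p"
  using assms unfolding subdigraph_def allowed_path_def by blast

lemma allowed_npath_subdigraph:
  assumes "subdigraph V' E' V E" "allowed_npath V' E' n p"
  shows "allowed_npath V E n p"
  using assms allowed_path_subdigraph unfolding allowed_npath_def by blast

lemma allowed_npath_vertices: "allowed_npath V E n p \<Longrightarrow> set p \<subseteq> V"
  unfolding allowed_npath_def allowed_path_def by blast

lemma path_val_cong: "(\<And>v. v \<in> set p \<Longrightarrow> f v = g v) \<Longrightarrow> path_val f p = path_val g p"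
  unfolding path_val_def by (rule sum.cong) auto

lemma critical_subdigraph:
  assumes sub: "subdigraph V' E' V E"
    and agree: "\<And>v. v \<in> V' \<Longrightarrow> g v = f v"
    and path: "allowed_npath V' E' n p"
    and crit: "critical V E f n p"
  shows "critical V' E' g n p"
proof -
  have val_eq: "path_val g q = path_val f q" if "allowed_npath V' E' m q" for m q
    using path_val_cong[of q g f] agree allowed_npath_vertices[OF that] by blast
  show ?thesis
    unfolding critical_def
  proof (intro conjI notI)
    show "allowed_npath V' E' n p" by (fact path)
  next
    assume "\<exists>b. n \<ge> 1 \<and> allowed_npath V' E' (n - 1) b \<and> path_less b p \<and>
      path_val g b = path_val g p"
    then obtain b where "n \<ge> 1" "allowed_npath V' E' (n - 1) b" "path_less b p"
      "path_val f b = path_val f p"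
      using val_eq path by metis
    then show False
      using crit allowed_npath_subdigraph[OF sub] unfolding critical_def by blast
  next
    assume "\<exists>a. allowed_npath V' E' (Suc n) a \<and> path_less p a \<and> path_val g a = path_val g p"
    then obtain a where "allowed_npath V' E' (Suc n) a" "path_less p a"
      "path_val f a = path_val f p"
      using val_eq path by metis
    then show False
      using crit allowed_npath_subdigraph[OF sub] unfolding critical_def by blast
  qed
qed

lemma free_span_Int: "free_span A \<inter> free_span B = free_span (A \<inter> B)"
  unfolding free_span_def by blast

lemma free_span_mono: "A \<subseteq> B \<Longrightarrow> free_span A \<subseteq> free_span B"
  unfolding free_span_def by blast

theorem proposition4p2:
  fixes V V' :: "'v set" and E E' :: "('v \<times> 'v) set" and f :: "'v \<Rightarrow> real"
  assumes "subdigraph V' E' V E"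
    and "discrete_morse V E f"
  shows "\<forall>n. (Crit_mod V E f n \<inter> P_mod V' E' n :: ('v list \<Rightarrow> 'r::comm_ring_1) set)
                \<subseteq> Crit_mod V' E' (\<lambda>v. if v \<in> V' then f v else 0) n
           \<and> (\<forall>p. allowed_npath V' E' n p \<and> critical V E f n p
                  \<longrightarrow> critical V' E' (\<lambda>v. if v \<in> V' then f v else 0) n p)"
proof (intro allI conjI impI)
  fix n
  have crit_restrict: "critical V' E' (\<lambda>v. if v \<in> V' then f v else 0) n p"
    if "allowed_npath V' E' n p \<and> critical V E f n p" for p
    using critical_subdigraph[OF assms(1)] that by simp
  then show "\<And>p. allowed_npath V' E' n p \<and> critical V E f n p
      \<Longrightarrow> critical V' E' (\<lambda>v. if v \<in> V' then f v else 0) n p" .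
  have "{p. critical V E f n p} \<inter> {p. allowed_npath V' E' n p}
      \<subseteq> {p. critical V' E' (\<lambda>v. if v \<in> V' then f v else 0) n p}"
    using crit_restrict by blast
  then show "(Crit_mod V E f n \<inter> P_mod V' E' n :: ('v list \<Rightarrow> 'r) set)
      \<subseteq> Crit_mod V' E' (\<lambda>v. if v \<in> V' then f v else 0) n"
    unfolding Crit_mod_def P_mod_def free_span_Int by (rule free_span_mono)
qed

end
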